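(* Under Assumption A1 (with the delay process indexed by all integers), the impulse response of the channel uncertainty satisfies the following. 1. For all $i\in\mathcal{D}$ and $k=0,1,2,\dots$: $\mathbb{E}\{\omega(k,k-i)\}=0$. 2. For all $i\in\mathcal{D}$ and $k_1,k_2\in\{0,1,2,\dots\}$: $$\mathbb{E}\{\omega(k_1,k_1-i)\omega(k_2,k_2-i)\}=\delta(k_1-k_2)\,\alpha_i^2p_i(1-p_i).$$ 3. For all $i_1\neq i_2$ in $\mathcal{D}$ and $k_1,k_2\in\{0,1,2,\dots\}$: $$\mathbb{E}\{\omega(k_1,k_1-i_1)\omega(k_2,k_2-i_2)\}=-\delta(k_1-i_1-k_2+i_2)\,\alpha_{i_1}\alpha_{i_2}p_{i_1}p_{i_2}.$$
   Context: Fix an integer $\bar\tau\ge1$, let $\mathcal{D}=\{0,\dots,\bar\tau\}$, and fix real weights $\alpha_0,\dots,\alpha_{\bar\tau}$. Assumption A1: $\{\tau_n\}$ is an i.i.d. sequence of $\mathcal{D}$-valued random variables with $\Pr\{\tau_n=i\}=p_i$, where $p_i\in[0,1]$ and $\sum_ip_i=1$. Let $\delta$ denote the Kronecker delta ($\delta(0)=1$, $\delta(m)=0$ for $m\ne0$). The impulse response of the channel uncertainty is $\omega(k,n)=\alpha_i[\delta(\tau_n-i)-p_i]$ if $k=n+i$ with $i\in\mathcal{D}$, and $\omega(k,n)=0$ otherwise. *)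

theory Defs
  imports "HOL-Probability.Probability"
begin

definition kdelta :: "int \<Rightarrow> real" where
  "kdelta m = (if m = 0 then 1 else 0)"

definition omega ::
  "nat \<Rightarrow> (nat \<Rightarrow> real) \<Rightarrow> (nat \<Rightarrow> real) \<Rightarrow> (int \<Rightarrow> 'a \<Rightarrow> nat) \<Rightarrow> int \<Rightarrow> int \<Rightarrow> 'a \<Rightarrow> real" where
  "omega taubar alpha p tau k n x =
     (if 0 \<le> k - n \<and> k - n \<le> int taubar
      then alpha (nat (k - n)) * (kdelta (int (tau n x) - (k - n)) - p (nat (k - n)))
      else 0)"

definition assumption_A1 ::
  "'a measure \<Rightarrow> nat \<Rightarrow> (nat \<Rightarrow> real) \<Rightarrow> (int \<Rightarrow> 'a \<Rightarrow> nat) \<Rightarrow> bool" where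
  "assumption_A1 M taubar p tau \<longleftrightarrow>
     prob_space M \<and>
     (\<forall>n. tau n \<in> measurable M (count_space UNIV)) \<and>
     (\<forall>n. \<forall>x\<in>space M. tau n x \<in> {0..taubar}) \<and>
     prob_space.indep_vars M (\<lambda>_. count_space UNIV) tau UNIV \<and>
     (\<forall>i\<in>{0..taubar}. 0 \<le> p i \<and> p i \<le> 1) \<and>
     (\<Sum>i\<in>{0..taubar}. p i) = 1 \<and>
     (\<forall>n. \<forall>i\<in>{0..taubar}. measure M {x\<in>space M. tau n x = i} = p i)"

end

theory Submission
  imports Defs
begin

text \<open>On the diagonal \<open>n = k - i\<close> the channel uncertainty is \<open>\<alpha>\<^sub>i\<close> times the centred indicator
  of the event \<open>\<tau>\<^sub>n = i\<close>. Centred indicators have mean zero and their products have mean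
  \<open>P(A \<inter> B) - P(A) P(B)\<close>; for delays at different times the intersection has probability
  \<open>p\<^sub>a p\<^sub>b\<close> by independence, so the covariance vanishes, while at equal times it is
  \<open>p\<^sub>a (1 - p\<^sub>a)\<close> or \<open>-p\<^sub>a p\<^sub>b\<close> according as the two delay values agree or not.\<close>

lemma (in prob_space) expectation_centered_indicator:
  assumes "A \<in> events"
  shows "expectation (\<lambda>x. indicator A x - prob A) = 0"
  using assms by (simp add: prob_space emeasure_eq_measure)

lemma (in prob_space) expectation_centered_indicator_mult:
  assumes "A \<in> events" and "B \<in> events"
  shows "expectation (\<lambda>x. (indicator A x - prob A) * (indicator B x - prob B))
       = prob (A \<inter> B) - prob A * prob B"
proof -
  have "(\<lambda>x. (indicator A x - prob A) * (indicator B x - prob B))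
      = (\<lambda>x. indicator (A \<inter> B) x - prob B * indicator A x - prob A * indicator B x
             + prob A * prob B :: real)"
    by (auto simp: indicator_def algebra_simps)
  then show ?thesis
    using assms by (simp add: prob_space emeasure_eq_measure)
qed

lemma (in prob_space) indep_vars_prob_level_sets:
  assumes "indep_vars (\<lambda>_. count_space UNIV) X I" and "n1 \<in> I" and "n2 \<in> I" and "n1 \<noteq> n2"
  shows "prob ({x\<in>space M. X n1 x = a} \<inter> {x\<in>space M. X n2 x = b})
       = prob {x\<in>space M. X n1 x = a} * prob {x\<in>space M. X n2 x = b}"
proof -
  define C where "C n = (if n = n1 then {a} else {b})" for n
  have "prob (\<Inter>n\<in>{n1, n2}. X n -` C n \<inter> space M) = (\<Prod>n\<in>{n1, n2}. prob (X n -` C n \<inter> space M))"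
    using assms by (intro indep_varsD) auto
  moreover have "X n1 -` C n1 \<inter> space M = {x\<in>space M. X n1 x = a}"
    and "X n2 -` C n2 \<inter> space M = {x\<in>space M. X n2 x = b}"
    using assms(4) by (auto simp: C_def)
  ultimately show ?thesis
    using assms(4) by (simp add: Int_commute)
qed

lemma assumption_A1_delay_event:
  assumes "assumption_A1 M taubar p tau"
  shows "{x\<in>space M. tau n x = i} \<in> sets M"
proof -
  have "tau n \<in> measurable M (count_space UNIV)"
    using assms by (simp add: assumption_A1_def)
  then have "tau n -` {i} \<inter> space M \<in> sets M"
    by (rule measurable_sets) simp
  moreover have "tau n -` {i} \<inter> space M = {x\<in>space M. tau n x = i}"
    by auto
  ultimately show ?thesis by simp
qed

lemma assumption_A1_prob_delay_joint:
  assumes A1: "assumption_A1 M taubar p tau" and "a \<le> taubar" and "b \<le> taubar"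
  shows "measure M ({x\<in>space M. tau n1 x = a} \<inter> {x\<in>space M. tau n2 x = b})
       = (if n1 = n2 then (if a = b then p a else 0) else p a * p b)"
proof -
  interpret prob_space M
    using A1 by (simp add: assumption_A1_def)
  have prob_delay: "prob {x\<in>space M. tau n x = c} = p c" if "c \<le> taubar" for n c
    using A1 that by (simp add: assumption_A1_def)
  show ?thesis
  proof (cases "n1 = n2")
    case True
    show ?thesis
    proof (cases "a = b")
      case True
      then show ?thesis
        using \<open>n1 = n2\<close> prob_delay assms(3) by simp
    next
      case False
      then have "{x\<in>space M. tau n1 x = a} \<inter> {x\<in>space M. tau n2 x = b} = {}"
        using \<open>n1 = n2\<close> by auto
      then show ?thesis
        using False \<open>n1 = n2\<close> by simp
    qed
  next
    case False
    have "indep_vars (\<lambda>_. count_space UNIV) tau UNIV"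
      using A1 by (simp add: assumption_A1_def)
    from indep_vars_prob_level_sets[OF this _ _ False] show ?thesis
      using False assms(2,3) by (simp add: prob_delay)
  qed
qed

lemma omega_diagonal:
  assumes "i \<le> taubar" and "x \<in> space M"
  shows "omega taubar alpha p tau k (k - int i) x
       = alpha i * (indicator {x\<in>space M. tau (k - int i) x = i} x - p i)"
  using assms by (simp add: omega_def kdelta_def indicator_def)

lemma assumption_A1_integral_omega:
  assumes A1: "assumption_A1 M taubar p tau" and "i \<le> taubar"
  shows "integral\<^sup>L M (omega taubar alpha p tau k (k - int i)) = 0"
proof -
  interpret prob_space M
    using A1 by (simp add: assumption_A1_def)
  let ?A = "{x\<in>space M. tau (k - int i) x = i}"
  have "prob ?A = p i"
    using A1 assms(2) by (simp add: assumption_A1_def)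
  then have "integral\<^sup>L M (omega taubar alpha p tau k (k - int i))
      = alpha i * expectation (\<lambda>x. indicator ?A x - prob ?A)"
    using assms(2) by (simp add: omega_diagonal cong: Bochner_Integration.integral_cong)
  also have "\<dots> = 0"
    using expectation_centered_indicator[OF assumption_A1_delay_event[OF A1]] by simp
  finally show ?thesis .
qed

lemma assumption_A1_integral_omega_mult:
  assumes A1: "assumption_A1 M taubar p tau" and "i1 \<le> taubar" and "i2 \<le> taubar"
  shows "integral\<^sup>L M (\<lambda>x. omega taubar alpha p tau k1 (k1 - int i1) x
                          * omega taubar alpha p tau k2 (k2 - int i2) x)
       = alpha i1 * alpha i2
         * ((if k1 - int i1 = k2 - int i2 then (if i1 = i2 then p i1 else 0) else p i1 * p i2)
            - p i1 * p i2)"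
proof -
  interpret prob_space M
    using A1 by (simp add: assumption_A1_def)
  let ?A = "{x\<in>space M. tau (k1 - int i1) x = i1}"
  let ?B = "{x\<in>space M. tau (k2 - int i2) x = i2}"
  have "prob ?A = p i1" "prob ?B = p i2"
    using A1 assms(2,3) by (simp_all add: assumption_A1_def)
  then have "integral\<^sup>L M (\<lambda>x. omega taubar alpha p tau k1 (k1 - int i1) x
                             * omega taubar alpha p tau k2 (k2 - int i2) x)
      = alpha i1 * alpha i2
        * expectation (\<lambda>x. (indicator ?A x - prob ?A) * (indicator ?B x - prob ?B))"
    using assms(2,3) by (simp add: omega_diagonal mult_ac cong: Bochner_Integration.integral_cong)
  also have "\<dots> = alpha i1 * alpha i2 * (prob (?A \<inter> ?B) - prob ?A * prob ?B)"
    using A1 by (simp add: expectation_centered_indicator_mult assumption_A1_delay_event)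
  finally show ?thesis
    using assumption_A1_prob_delay_joint[OF A1 assms(2,3)] \<open>prob ?A = p i1\<close> \<open>prob ?B = p i2\<close>
    by simp
qed

theorem lemma3p1:
  fixes M :: "'a measure" and taubar :: nat and alpha p :: "nat \<Rightarrow> real"
    and tau :: "int \<Rightarrow> 'a \<Rightarrow> nat"
  assumes "taubar \<ge> 1"
    and "assumption_A1 M taubar p tau"
  shows "(\<forall>i\<in>{0..taubar}. \<forall>k::nat.
            integral\<^sup>L M (omega taubar alpha p tau (int k) (int k - int i)) = 0)
       \<and> (\<forall>i\<in>{0..taubar}. \<forall>k1 k2::nat.
            integral\<^sup>L M (\<lambda>x. omega taubar alpha p tau (int k1) (int k1 - int i) x
                            * omega taubar alpha p tau (int k2) (int k2 - int i) x)
            = kdelta (int k1 - int k2) * (alpha i)\<^sup>2 * p i * (1 - p i))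
       \<and> (\<forall>i1\<in>{0..taubar}. \<forall>i2\<in>{0..taubar}. i1 \<noteq> i2 \<longrightarrow> (\<forall>k1 k2::nat.
            integral\<^sup>L M (\<lambda>x. omega taubar alpha p tau (int k1) (int k1 - int i1) x
                            * omega taubar alpha p tau (int k2) (int k2 - int i2) x)
            = - kdelta (int k1 - int i1 - int k2 + int i2) * alpha i1 * alpha i2 * p i1 * p i2))"
proof (intro conjI ballI allI impI)
  fix i k
  assume "i \<in> {0..taubar}"
  then show "integral\<^sup>L M (omega taubar alpha p tau (int k) (int k - int i)) = 0"
    using assumption_A1_integral_omega[OF assms(2)] by simp
next
  fix i k1 k2
  assume "i \<in> {0..taubar}"
  then show "integral\<^sup>L M (\<lambda>x. omega taubar alpha p tau (int k1) (int k1 - int i) x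
                            * omega taubar alpha p tau (int k2) (int k2 - int i) x)
            = kdelta (int k1 - int k2) * (alpha i)\<^sup>2 * p i * (1 - p i)"
    using assumption_A1_integral_omega_mult[OF assms(2), of i i alpha "int k1" "int k2"]
    by (cases "k1 = k2") (simp_all add: kdelta_def power2_eq_square algebra_simps)
next
  fix i1 i2 k1 k2
  assume "i1 \<in> {0..taubar}" "i2 \<in> {0..taubar}" "i1 \<noteq> i2"
  then show "integral\<^sup>L M (\<lambda>x. omega taubar alpha p tau (int k1) (int k1 - int i1) x
                            * omega taubar alpha p tau (int k2) (int k2 - int i2) x)
            = - kdelta (int k1 - int i1 - int k2 + int i2) * alpha i1 * alpha i2 * p i1 * p i2"
    using assumption_A1_integral_omega_mult[OF assms(2), of i1 i2 alpha "int k1" "int k2"]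
    by (auto simp: kdelta_def algebra_simps)
qed

end
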